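(* Let $(\mathcal{G},c)$ be a colored directed acyclic graph with compatible coloring, and assume that $c(i)=c(j)$ implies $(\mathcal{G}_i,c)\cong(\mathcal{G}_j,c)$ for all vertices $i,j$. Then there exists an inverse topological order $\succ$ of $V$ in which each vertex color class forms a consecutive block, i.e. $i\succ j\succ k$ and $c(i)=c(k)$ imply $c(j)=c(i)$.
   Context: $\mathcal{G}=(V,\vec E)$ is a finite DAG; $j\to i$ means $(j,i)\in\vec E$. A coloring is $c:V\cup\vec E\to[r+R]$; compatible means $c(V)\cap c(\vec E)=\emptyset$ and $c(j\to i)=c(l\to k)$ implies $c(i)=c(k)$. $\mathrm{ch}(i)=\{k:i\to k\}$; $(\mathcal{G}_i,c)$ is the colored graph on $\{i\}\cup\mathrm{ch}(i)$ with edges $i\to k$, $k\in\mathrm{ch}(i)$, and colors inherited from $c$; $\cong$ is isomorphism of colored graphs. An inverse topological order is a total order $\succ$ on $V$ such that $j\to i$ implies $j\succ i$. *)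

theory Defs
  imports Main
begin

text \<open>A finite DAG on vertex set V with edge set E (pairs (j,i) meaning j \<rightarrow> i).\<close>
definition finite_dag :: "'a set \<Rightarrow> ('a \<times> 'a) set \<Rightarrow> bool" where
  "finite_dag V E \<longleftrightarrow> finite V \<and> E \<subseteq> V \<times> V \<and> acyclic E"

text \<open>A coloring c of V \<union> E is split into its vertex part cV and edge part cE.\<close>
definition compatible_coloring ::
  "'a set \<Rightarrow> ('a \<times> 'a) set \<Rightarrow> ('a \<Rightarrow> 'c) \<Rightarrow> ('a \<times> 'a \<Rightarrow> 'c) \<Rightarrow> bool" where
  "compatible_coloring V E cV cE \<longleftrightarrow>
     cV ` V \<inter> cE ` E = {} \<and>
     (\<forall>e\<in>E. \<forall>e'\<in>E. cE e = cE e' \<longrightarrow> cV (snd e) = cV (snd e'))"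

definition children :: "('a \<times> 'a) set \<Rightarrow> 'a \<Rightarrow> 'a set" where
  "children E i = {k. (i, k) \<in> E}"

definition local_vertices :: "('a \<times> 'a) set \<Rightarrow> 'a \<Rightarrow> 'a set" where
  "local_vertices E i = insert i (children E i)"

definition local_edges :: "('a \<times> 'a) set \<Rightarrow> 'a \<Rightarrow> ('a \<times> 'a) set" where
  "local_edges E i = {(i, k) | k. k \<in> children E i}"

definition local_iso ::
  "('a \<times> 'a) set \<Rightarrow> ('a \<Rightarrow> 'c) \<Rightarrow> ('a \<times> 'a \<Rightarrow> 'c) \<Rightarrow> 'a \<Rightarrow> 'a \<Rightarrow> bool" where
  "local_iso E cV cE i j \<longleftrightarrow>
     (\<exists>f. bij_betw f (local_vertices E i) (local_vertices E j) \<and>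
          (\<forall>x\<in>local_vertices E i. \<forall>y\<in>local_vertices E i.
              (x, y) \<in> local_edges E i \<longleftrightarrow> (f x, f y) \<in> local_edges E j) \<and>
          (\<forall>x\<in>local_vertices E i. cV (f x) = cV x) \<and>
          (\<forall>(x, y)\<in>local_edges E i. cE (f x, f y) = cE (x, y)))"

text \<open>Inverse topological order: strict total order R on V ((j,i) \<in> R means j \<succ> i)
  such that j \<rightarrow> i implies j \<succ> i.\<close>
definition inverse_topological_order :: "'a set \<Rightarrow> ('a \<times> 'a) set \<Rightarrow> ('a \<times> 'a) set \<Rightarrow> bool" where
  "inverse_topological_order V E R \<longleftrightarrow>
     R \<subseteq> V \<times> V \<and> strict_linear_order_on V R \<and> E \<subseteq> R"

end

theory Submission
  imports Defs "HOL-Library.Product_Lexorder"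
begin

text \<open>Order the vertices by their height (the length of a longest path starting there), then
  by colour, then arbitrarily. Edges strictly decrease the height, so this is an inverse
  topological order. Equally coloured vertices have equally coloured children (the local
  graphs are isomorphic), and by induction on the height they have the same height; hence
  each colour class sits inside one height level, where it forms a consecutive block.\<close>

definition height :: "('a \<times> 'a) set \<Rightarrow> 'a \<Rightarrow> nat" where
  "height E = wfrec (E\<inverse>) (\<lambda>h v. Max (insert 0 ((\<lambda>k. Suc (h k)) ` children E v)))"

lemma finite_children: "finite E \<Longrightarrow> finite (children E v)"
  by (rule finite_subset[of _ "snd ` E"]) (force simp: children_def)+

lemma height_unfold:
  assumes "finite E" "acyclic E"
  shows "height E v = Max (insert 0 ((\<lambda>k. Suc (height E k)) ` children E v))"
proof -
  have "height E v = Max (insert 0 ((\<lambda>k. Suc (cut (height E) (E\<inverse>) v k)) ` children E v))"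
    by (rule def_wfrec[OF height_def[THEN eq_reflection] finite_acyclic_wf_converse[OF assms]])
  also have "(\<lambda>k. Suc (cut (height E) (E\<inverse>) v k)) ` children E v
           = (\<lambda>k. Suc (height E k)) ` children E v"
    by (rule image_cong) (auto simp: children_def cut_apply)
  finally show ?thesis .
qed

lemma height_child_less:
  assumes "finite E" "acyclic E" "(v, k) \<in> E"
  shows "height E k < height E v"
proof -
  have "Suc (height E k) \<in> insert 0 ((\<lambda>k. Suc (height E k)) ` children E v)"
    using assms(3) by (simp add: children_def)
  then have "Suc (height E k) \<le> height E v"
    unfolding height_unfold[OF assms(1,2), of v]
    using finite_children[OF assms(1)] by (intro Max_ge) auto
  then show ?thesis by simp
qed

lemma height_pos_obtains_child:
  assumes "finite E" "acyclic E" "0 < height E v"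
  obtains k where "(v, k) \<in> E" "height E v = Suc (height E k)"
proof -
  have "height E v \<in> insert 0 ((\<lambda>k. Suc (height E k)) ` children E v)"
    unfolding height_unfold[OF assms(1,2), of v]
    using finite_children[OF assms(1)] by (intro Max_in) auto
  with assms(3) that show ?thesis by (auto simp: children_def)
qed

text \<open>A local isomorphism must send the root to the root, as the root is the only vertex
  with outgoing local edges.\<close>

lemma local_iso_child_colors:
  assumes "local_iso E cV cE i j"
  shows "cV ` children E i \<subseteq> cV ` children E j"
proof
  fix c assume "c \<in> cV ` children E i"
  then obtain k where k: "(i, k) \<in> E" "c = cV k" by (auto simp: children_def)
  from assms obtain f where
    edges: "\<forall>x\<in>local_vertices E i. \<forall>y\<in>local_vertices E i.
              (x, y) \<in> local_edges E i \<longleftrightarrow> (f x, f y) \<in> local_edges E j"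
    and colors: "\<forall>x\<in>local_vertices E i. cV (f x) = cV x"
    unfolding local_iso_def by blast
  have ik: "i \<in> local_vertices E i" "k \<in> local_vertices E i"
    using k(1) by (auto simp: local_vertices_def children_def)
  have "(i, k) \<in> local_edges E i"
    using k(1) by (auto simp: local_edges_def children_def)
  then have "(f i, f k) \<in> local_edges E j" using edges ik by blast
  then have "f k \<in> children E j" by (auto simp: local_edges_def)
  with colors ik k(2) show "c \<in> cV ` children E j" by (metis image_eqI)
qed

lemma height_le_if_child_colors_le:
  assumes "finite E" "acyclic E" "E \<subseteq> V \<times> V"
    and child_colors: "\<And>i j. i \<in> V \<Longrightarrow> j \<in> V \<Longrightarrow> c i = c j \<Longrightarrow>
                               c ` children E i \<subseteq> c ` children E j"
    and "i \<in> V" "j \<in> V" "c i = c j"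
  shows "height E i \<le> height E j"
  using assms(5-7)
proof (induction "height E i" arbitrary: i j rule: less_induct)
  case less
  show ?case
  proof (cases "height E i = 0")
    case False
    then obtain k where k: "(i, k) \<in> E" "height E i = Suc (height E k)"
      using height_pos_obtains_child[OF assms(1,2)] by blast
    then have "c k \<in> c ` children E j"
      using child_colors[OF less.prems] by (auto simp: children_def)
    then obtain k' where k': "(j, k') \<in> E" "c k' = c k" by (auto simp: children_def)
    have "height E k \<le> height E k'"
      using less.hyps[of k k'] k k' assms(3) by auto
    also have "height E k' < height E j"
      using height_child_less[OF assms(1,2) k'(1)] .
    finally show ?thesis using k(2) by simp
  qed simp
qed

lemma inverse_topological_order_by_key:
  fixes key :: "'a \<Rightarrow> 'b::linorder"
  assumes "E \<subseteq> V \<times> V" "inj_on key V" "\<And>x y. (x, y) \<in> E \<Longrightarrow> key y < key x"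
  shows "inverse_topological_order V E {(x, y). x \<in> V \<and> y \<in> V \<and> key y < key x}"
proof -
  let ?R = "{(x, y). x \<in> V \<and> y \<in> V \<and> key y < key x}"
  have "total_on V ?R"
  proof (rule total_onI)
    fix x y assume "x \<in> V" "y \<in> V" "x \<noteq> y"
    moreover from this have "key x \<noteq> key y" using assms(2) by (auto dest: inj_onD)
    ultimately show "(x, y) \<in> ?R \<or> (y, x) \<in> ?R" by (auto simp: neq_iff)
  qed
  moreover have "trans ?R" by (auto intro!: transI)
  moreover have "irrefl ?R" by (auto simp: irrefl_def)
  moreover have "E \<subseteq> ?R" using assms(1,3) by auto
  moreover have "?R \<subseteq> V \<times> V" by auto
  ultimately show ?thesis
    unfolding inverse_topological_order_def strict_linear_order_on_def by blast
qed

lemma fst_lex_eq_if_between: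
  fixes p q r :: "('a::linorder \<times> 'b::linorder)"
  assumes "p < q" "q < r" "fst p = fst r"
  shows "fst q = fst p"
  using assms by (auto simp: less_prod_def)

theorem lemma7p12:
  fixes V :: "'a set" and E :: "('a \<times> 'a) set"
    and cV :: "'a \<Rightarrow> nat" and cE :: "'a \<times> 'a \<Rightarrow> nat"
  assumes "finite_dag V E"
    and "compatible_coloring V E cV cE"
    and "\<forall>i\<in>V. \<forall>j\<in>V. cV i = cV j \<longrightarrow> local_iso E cV cE i j"
  shows "\<exists>R. inverse_topological_order V E R \<and>
           (\<forall>i j k. (i, j) \<in> R \<and> (j, k) \<in> R \<and> cV i = cV k \<longrightarrow> cV j = cV i)"
proof -
  have V: "finite V" and E: "E \<subseteq> V \<times> V" "acyclic E"
    using assms(1) by (auto simp: finite_dag_def)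
  have "finite E" using V E(1) by (meson finite_SigmaI finite_subset)
  have height_le: "height E i \<le> height E j" if "i \<in> V" "j \<in> V" "cV i = cV j" for i j
    by (rule height_le_if_child_colors_le[OF \<open>finite E\<close> E(2,1) local_iso_child_colors[of E cV cE]])
      (use assms(3) that in auto)
  have same_height: "height E i = height E j" if "i \<in> V" "j \<in> V" "cV i = cV j" for i j
    using that by (intro antisym height_le) auto
  obtain g :: "'a \<Rightarrow> nat" where "inj_on g V"
    using finite_imp_inj_to_nat_seg[OF V] by blast
  define key where "key v = ((height E v, cV v), g v)" for v
  have "inj_on key V" using \<open>inj_on g V\<close> by (auto simp: key_def inj_on_def)
  moreover have "key y < key x" if "(x, y) \<in> E" for x y
    using height_child_less[OF \<open>finite E\<close> E(2) that] by (simp add: key_def)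
  moreover have "cV j = cV i" if "key k < key j" "key j < key i" "cV i = cV k" "i \<in> V" "k \<in> V"
    for i j k
    using fst_lex_eq_if_between[OF that(1,2)] same_height[OF that(4,5,3)] that(3)
    by (simp add: key_def)
  ultimately show ?thesis
    by (intro exI[of _ "{(x, y). x \<in> V \<and> y \<in> V \<and> key y < key x}"] conjI
        inverse_topological_order_by_key[OF E(1)]) auto
qed

end
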